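(* Let $a,b,c,d,e,f\in[0,1]$ and set $Q_3=2abef+2acdf+2bcde+2abd+2ace+2bcf+2def+a^2+b^2+c^2+d^2+e^2+f^2-a^2f^2-b^2e^2-c^2d^2-1$, $A_i=d^2+e^2+f^2+2def-1$, $A_j=b^2+c^2+f^2+2bcf-1$, $A_k=a^2+c^2+e^2+2ace-1$, $A_h=a^2+b^2+d^2+2abd-1$. If $A_\nu\ge 0$ for at least one $\nu\in\{i,j,k,h\}$, then $Q_3\ge0$. In particular, if $A_\nu>0$ for some $\nu$, then $Q_3>0$.
   Context: In the paper $a,\dots,f$ are the cosines $\cos\Phi_{ij},\cos\Phi_{ik},\cos\Phi_{ih},\cos\Phi_{jk},\cos\Phi_{jh},\cos\Phi_{kh}$ of edge weights $\Phi\in[0,\frac{\pi}{2}]$ on a truncated tetrahedron $\{ijkh\}$. *)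

theory Defs
  imports Complex_Main
begin

definition Q3 :: "real \<Rightarrow> real \<Rightarrow> real \<Rightarrow> real \<Rightarrow> real \<Rightarrow> real \<Rightarrow> real" where
  "Q3 a b c d e f = 2*a*b*e*f + 2*a*c*d*f + 2*b*c*d*e + 2*a*b*d + 2*a*c*e + 2*b*c*f + 2*d*e*f
     + a^2 + b^2 + c^2 + d^2 + e^2 + f^2 - a^2*f^2 - b^2*e^2 - c^2*d^2 - 1"

definition A_i :: "real \<Rightarrow> real \<Rightarrow> real \<Rightarrow> real" where
  "A_i d e f = d^2 + e^2 + f^2 + 2*d*e*f - 1"
definition A_j :: "real \<Rightarrow> real \<Rightarrow> real \<Rightarrow> real" where
  "A_j b c f = b^2 + c^2 + f^2 + 2*b*c*f - 1"
definition A_k :: "real \<Rightarrow> real \<Rightarrow> real \<Rightarrow> real" where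
  "A_k a c e = a^2 + c^2 + e^2 + 2*a*c*e - 1"
definition A_h :: "real \<Rightarrow> real \<Rightarrow> real \<Rightarrow> real" where
  "A_h a b d = a^2 + b^2 + d^2 + 2*a*b*d - 1"

end

theory Submission
  imports Defs
begin

text \<open>
  For every vertex \<open>\<nu>\<close>, \<open>Q3 - A\<^sub>\<nu>\<close> is a sum of terms \<open>x\<^sup>2 (1 - y\<^sup>2)\<close> and of
  products of the cosines, all of which are nonnegative when the cosines lie in \<open>[0,1]\<close>;
  hence \<open>A\<^sub>\<nu> \<le> Q3\<close>. It suffices to check this for \<open>\<nu> = i\<close>: relabelling the vertices of the
  tetrahedron permutes the edge cosines, leaves \<open>Q3\<close> invariant and carries \<open>A\<^sub>i\<close> to the other \<open>A\<^sub>\<nu>\<close>.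
\<close>

lemma Q3_minus_A_i:
  "Q3 a b c d e f - A_i d e f = a\<^sup>2 * (1 - f\<^sup>2) + b\<^sup>2 * (1 - e\<^sup>2) + c\<^sup>2 * (1 - d\<^sup>2)
     + 2 * (a*b*e*f + a*c*d*f + b*c*d*e + a*b*d + a*c*e + b*c*f)"
  unfolding Q3_def A_i_def by (simp add: algebra_simps)

lemma A_i_le_Q3:
  fixes a b c d e f :: real
  assumes "a \<in> {0..1}" "b \<in> {0..1}" "c \<in> {0..1}" "d \<in> {0..1}" "e \<in> {0..1}" "f \<in> {0..1}"
  shows "A_i d e f \<le> Q3 a b c d e f"
proof -
  have one_minus_sq: "0 \<le> 1 - x\<^sup>2" if "x \<in> {0..1}" for x :: real
    using that by (simp add: power_le_one)
  have "0 \<le> a\<^sup>2 * (1 - f\<^sup>2) + b\<^sup>2 * (1 - e\<^sup>2) + c\<^sup>2 * (1 - d\<^sup>2)"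
    using one_minus_sq assms by (simp add: add_nonneg_nonneg)
  moreover have "0 \<le> a*b*e*f + a*c*d*f + b*c*d*e + a*b*d + a*c*e + b*c*f"
    using assms by (simp add: add_nonneg_nonneg)
  ultimately have "0 \<le> Q3 a b c d e f - A_i d e f"
    unfolding Q3_minus_A_i by simp
  then show ?thesis
    by simp
qed

lemma Q3_swap_ij: "Q3 a d e b c f = Q3 a b c d e f"
  unfolding Q3_def by (simp add: algebra_simps)

lemma Q3_swap_ik: "Q3 d b f a e c = Q3 a b c d e f"
  unfolding Q3_def by (simp add: algebra_simps)

lemma Q3_swap_ih: "Q3 e f c d a b = Q3 a b c d e f"
  unfolding Q3_def by (simp add: algebra_simps)

theorem lemma2p3:
  fixes a b c d e f :: real
  assumes "a \<in> {0..1}" "b \<in> {0..1}" "c \<in> {0..1}" "d \<in> {0..1}" "e \<in> {0..1}" "f \<in> {0..1}"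
  shows "(A_i d e f \<ge> 0 \<or> A_j b c f \<ge> 0 \<or> A_k a c e \<ge> 0 \<or> A_h a b d \<ge> 0 \<longrightarrow> Q3 a b c d e f \<ge> 0)
       \<and> (A_i d e f > 0 \<or> A_j b c f > 0 \<or> A_k a c e > 0 \<or> A_h a b d > 0 \<longrightarrow> Q3 a b c d e f > 0)"
proof -
  have "A_i d e f \<le> Q3 a b c d e f"
    using A_i_le_Q3 assms by blast
  moreover have "A_j b c f \<le> Q3 a b c d e f"
    using A_i_le_Q3[of a d e b c f] assms by (simp add: Q3_swap_ij A_i_def A_j_def)
  moreover have "A_k a c e \<le> Q3 a b c d e f"
    using A_i_le_Q3[of d b f a e c] assms by (simp add: Q3_swap_ik A_i_def A_k_def algebra_simps)
  moreover have "A_h a b d \<le> Q3 a b c d e f"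
    using A_i_le_Q3[of e f c d a b] assms by (simp add: Q3_swap_ih A_i_def A_h_def algebra_simps)
  ultimately show ?thesis
    by linarith
qed

end
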